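(* Let $G$ be a 5-vertex-critical $(P_5,\text{chair})$-free graph and let $C=v_1v_2v_3v_4v_5v_1$ be an induced $C_5$ in $G$. Then for every $1\le i\le 5$, the vertex set of every connected component of $G[S^2_3(i)]$ is a homogeneous set of $G$.
   Context: All graphs are finite and simple; $P_5$ is the path on 5 vertices; the chair is a $P_4$ plus a vertex adjacent to exactly one of the two middle vertices of the $P_4$; "$H$-free" means no induced subgraph isomorphic to $H$; $G$ is $k$-vertex-critical if $\chi(G)=k$ and $\chi(G-v)<k$ for all $v$. Indices modulo 5. $S^2_3(i)=\{v\in V(G)\setminus V(C): N(v)\cap V(C)=\{v_{i-2},v_i,v_{i+2}\}\}$. A set $H\subseteq V(G)$ is homogeneous if no vertex of $V(G)\setminus H$ is mixed on $H$, i.e. every vertex outside $H$ is adjacent to all or to none of the vertices of $H$. *)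

theory Defs
  imports Main
begin

definition simple_graph :: "'a set \<Rightarrow> ('a \<Rightarrow> 'a \<Rightarrow> bool) \<Rightarrow> bool" where
  "simple_graph V E \<longleftrightarrow> finite V \<and>
     (\<forall>x y. E x y \<longrightarrow> x \<in> V \<and> y \<in> V \<and> x \<noteq> y) \<and>
     (\<forall>x y. E x y \<longrightarrow> E y x)"

definition colorable :: "'a set \<Rightarrow> ('a \<Rightarrow> 'a \<Rightarrow> bool) \<Rightarrow> nat \<Rightarrow> bool" where
  "colorable V E k \<longleftrightarrow> (\<exists>c :: 'a \<Rightarrow> nat. (\<forall>x\<in>V. c x < k) \<and>
     (\<forall>x\<in>V. \<forall>y\<in>V. E x y \<longrightarrow> c x \<noteq> c y))"

definition chromatic_number :: "'a set \<Rightarrow> ('a \<Rightarrow> 'a \<Rightarrow> bool) \<Rightarrow> nat" where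
  "chromatic_number V E = (LEAST k. colorable V E k)"

definition vertex_critical :: "'a set \<Rightarrow> ('a \<Rightarrow> 'a \<Rightarrow> bool) \<Rightarrow> nat \<Rightarrow> bool" where
  "vertex_critical V E k \<longleftrightarrow> chromatic_number V E = k \<and>
     (\<forall>v\<in>V. chromatic_number (V - {v}) E < k)"

definition contains_induced :: "'a set \<Rightarrow> ('a \<Rightarrow> 'a \<Rightarrow> bool) \<Rightarrow> nat \<Rightarrow> (nat \<Rightarrow> nat \<Rightarrow> bool) \<Rightarrow> bool" where
  "contains_induced V E n F \<longleftrightarrow> (\<exists>f :: nat \<Rightarrow> 'a. inj_on f {..<n} \<and> f ` {..<n} \<subseteq> V \<and>
     (\<forall>i<n. \<forall>j<n. E (f i) (f j) \<longleftrightarrow> F i j))"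

definition P5_adj :: "nat \<Rightarrow> nat \<Rightarrow> bool" where
  "P5_adj i j \<longleftrightarrow> i = j + 1 \<or> j = i + 1"

definition chair_adj :: "nat \<Rightarrow> nat \<Rightarrow> bool" where
  "chair_adj i j \<longleftrightarrow> (i < 4 \<and> j < 4 \<and> (i = j + 1 \<or> j = i + 1)) \<or>
                     (i = 4 \<and> j = 1) \<or> (i = 1 \<and> j = 4)"

definition P5_free :: "'a set \<Rightarrow> ('a \<Rightarrow> 'a \<Rightarrow> bool) \<Rightarrow> bool" where
  "P5_free V E \<longleftrightarrow> \<not> contains_induced V E 5 P5_adj"

definition chair_free :: "'a set \<Rightarrow> ('a \<Rightarrow> 'a \<Rightarrow> bool) \<Rightarrow> bool" where
  "chair_free V E \<longleftrightarrow> \<not> contains_induced V E 5 chair_adj"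

definition induced_C5 :: "'a set \<Rightarrow> ('a \<Rightarrow> 'a \<Rightarrow> bool) \<Rightarrow> (nat \<Rightarrow> 'a) \<Rightarrow> bool" where
  "induced_C5 V E v \<longleftrightarrow> inj_on v {..<5} \<and> v ` {..<5} \<subseteq> V \<and>
     (\<forall>i<5. \<forall>j<5. E (v i) (v j) \<longleftrightarrow> (j = (i + 1) mod 5 \<or> i = (j + 1) mod 5))"

text \<open>S^2_3(i): vertices outside C whose neighbours on C are exactly v_{i-2}, v_i, v_{i+2}.\<close>
definition S23 :: "'a set \<Rightarrow> ('a \<Rightarrow> 'a \<Rightarrow> bool) \<Rightarrow> (nat \<Rightarrow> 'a) \<Rightarrow> nat \<Rightarrow> 'a set" where
  "S23 V E v i = {u \<in> V - v ` {..<5}.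
     {j. j < 5 \<and> E u (v j)} = {(i + 3) mod 5, i mod 5, (i + 2) mod 5}}"

definition components :: "'a set \<Rightarrow> ('a \<Rightarrow> 'a \<Rightarrow> bool) \<Rightarrow> 'a set set" where
  "components S E = {{y. (\<lambda>a b. a \<in> S \<and> b \<in> S \<and> E a b)\<^sup>*\<^sup>* x y} | x. x \<in> S}"

definition homogeneous :: "'a set \<Rightarrow> ('a \<Rightarrow> 'a \<Rightarrow> bool) \<Rightarrow> 'a set \<Rightarrow> bool" where
  "homogeneous V E H \<longleftrightarrow> H \<subseteq> V \<and>
     (\<forall>u \<in> V - H. (\<forall>h\<in>H. E u h) \<or> (\<forall>h\<in>H. \<not> E u h))"

end

theory Submission
  imports Defs
begin

text \<open>
  After rotating C we may take i = 0, so that S23 consists of the vertices off C whose neighbours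
  on C are exactly w 0, w 2, w 3. A component of G[S] is homogeneous as soon as no vertex outside
  S distinguishes the ends of an edge of G[S]: a vertex of S adjacent to the component lies in it,
  and adjacency of any other vertex is constant along paths of the component. Vertices of C do
  not distinguish vertices of S23 at all. If a vertex z off C sees x but not y for an edge x y of
  G[S23], then every neighbourhood of z on C other than {w 0, w 2, w 3} yields an induced P5 or
  chair on C, x, y, z, so z lies in S23 after all.
\<close>

lemma contains_induced_listI:
  assumes "distinct ps" and "set ps \<subseteq> V"
    and "\<And>i j. i < length ps \<Longrightarrow> j < length ps \<Longrightarrow> E (ps ! i) (ps ! j) \<longleftrightarrow> F i j"
  shows "contains_induced V E (length ps) F"
  unfolding contains_induced_def
proof (intro exI[of _ "nth ps"] conjI allI impI)
  show "inj_on (nth ps) {..<length ps}"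
    using assms(1) by (simp add: inj_on_def nth_eq_iff_index_eq)
  show "nth ps ` {..<length ps} \<subseteq> V"
    using assms(2) by auto
qed (use assms(3) in blast)

lemma lessThan_5: "{..<5::nat} = {0, 1, 2, 3, 4}"
  by (auto simp: less_Suc_eq numeral_eq_Suc)

lemma image_lessThan_5: "(w :: nat \<Rightarrow> 'a) ` {..<5} = {w 0, w 1, w 2, w 3, w 4}"
  by (simp add: lessThan_5)

lemma mod_5_add_left_cancel:
  fixes k l :: nat
  assumes "k < 5" and "l < 5"
  shows "(i + k) mod 5 = (i + l) mod 5 \<longleftrightarrow> k = l"
proof
  show "(i + k) mod 5 = (i + l) mod 5 \<Longrightarrow> k = l"
    using assms
  proof (induction k l rule: linorder_wlog)
    case (le k l)
    then have "5 dvd (i + l) - (i + k)"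
      using mod_eq_dvd_iff_nat[of "i + k" "i + l" 5] by simp
    then show ?case
      using le by (auto dest: dvd_imp_le)
  qed auto
qed simp

lemma inj_on_rotate_5: "inj_on (\<lambda>k. (i + k) mod 5) {..<(5::nat)}"
  by (auto simp: inj_on_def mod_5_add_left_cancel)

lemma image_rotate_5: "(\<lambda>k. (i + k) mod 5) ` {..<5} = {..<(5::nat)}"
  by (rule endo_inj_surj) (auto simp: inj_on_rotate_5)

lemma induced_C5_rotate:
  assumes "induced_C5 V E v"
  shows "induced_C5 V E (\<lambda>k. v ((i + k) mod 5))"
  unfolding induced_C5_def
proof (intro conjI allI impI)
  have inj: "inj_on v {..<5}" and sub: "v ` {..<5} \<subseteq> V"
    and adj: "\<And>k l. k < 5 \<Longrightarrow> l < 5 \<Longrightarrow> E (v k) (v l) \<longleftrightarrow> l = (k + 1) mod 5 \<or> k = (l + 1) mod 5"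
    using assms unfolding induced_C5_def by auto
  show "inj_on (\<lambda>k. v ((i + k) mod 5)) {..<5}"
    using comp_inj_on[OF inj_on_rotate_5, of v i] inj by (simp add: image_rotate_5 o_def)
  show "(\<lambda>k. v ((i + k) mod 5)) ` {..<5} \<subseteq> V"
    using sub by auto
  fix k l :: nat assume k: "k < 5" and l: "l < 5"
  have succ: "((i + m) mod 5 + 1) mod 5 = (i + (m + 1) mod 5) mod 5" for m
    by (simp add: mod_simps add.assoc)
  have "E (v ((i + k) mod 5)) (v ((i + l) mod 5)) \<longleftrightarrow>
      (i + l) mod 5 = ((i + k) mod 5 + 1) mod 5 \<or> (i + k) mod 5 = ((i + l) mod 5 + 1) mod 5"
    by (rule adj) simp_all
  also have "\<dots> \<longleftrightarrow> (i + l) mod 5 = (i + (k + 1) mod 5) mod 5 \<or> (i + k) mod 5 = (i + (l + 1) mod 5) mod 5"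
    by (simp only: succ)
  also have "\<dots> \<longleftrightarrow> l = (k + 1) mod 5 \<or> k = (l + 1) mod 5"
    using k l by (simp only: mod_5_add_left_cancel mod_less_divisor zero_less_numeral)
  finally show "E (v ((i + k) mod 5)) (v ((i + l) mod 5)) \<longleftrightarrow> l = (k + 1) mod 5 \<or> k = (l + 1) mod 5" .
qed

lemma Collect_rotate_5_eq_iff:
  fixes i :: nat
  assumes "B \<subseteq> {..<5}"
  shows "{j. j < 5 \<and> P ((i + j) mod 5)} = B \<longleftrightarrow> {j. j < 5 \<and> P j} = (\<lambda>j. (i + j) mod 5) ` B"
proof -
  let ?r = "\<lambda>j::nat. (i + j) mod 5"
  have "?r ` {j. j < 5 \<and> P (?r j)} = {j \<in> ?r ` {..<5}. P j}"
    by auto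
  also have "\<dots> = {j. j < 5 \<and> P j}"
    unfolding image_rotate_5 by auto
  finally have img: "?r ` {j. j < 5 \<and> P (?r j)} = {j. j < 5 \<and> P j}" .
  have "{j. j < 5 \<and> P (?r j)} = B \<longleftrightarrow> ?r ` {j. j < 5 \<and> P (?r j)} = ?r ` B"
    using assms by (intro inj_on_image_eq_iff[symmetric, OF inj_on_rotate_5]) auto
  then show ?thesis
    by (simp only: img)
qed

lemma S23_rotate: "S23 V E v i = S23 V E (\<lambda>k. v ((i + k) mod 5)) 0"
proof -
  have "(\<lambda>k. v ((i + k) mod 5)) ` {..<5} = v ` {..<5}"
    using image_rotate_5[of i] by (metis image_image)
  moreover have "{j. j < 5 \<and> E u (v ((i + j) mod 5))} = {(0 + 3) mod 5, 0 mod 5, (0 + 2) mod 5} \<longleftrightarrow>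
      {j. j < 5 \<and> E u (v j)} = {(i + 3) mod 5, i mod 5, (i + 2) mod 5}" for u
    by (subst Collect_rotate_5_eq_iff) auto
  ultimately show ?thesis
    unfolding S23_def by simp
qed

lemma Collect_less_5_eq_iff:
  "A \<subseteq> {..<5} \<Longrightarrow> {j. j < (5::nat) \<and> P j} = A \<longleftrightarrow> (\<forall>j<5. P j \<longleftrightarrow> j \<in> A)"
  by auto

lemma all_less_5: "(\<forall>j<(5::nat). P j) \<longleftrightarrow> P 0 \<and> P 1 \<and> P 2 \<and> P 3 \<and> P 4"
  by (auto simp: less_Suc_eq numeral_eq_Suc)

lemma S23_0_iff:
  "u \<in> S23 V E w 0 \<longleftrightarrow> u \<in> V - w ` {..<5} \<and>
     E u (w 0) \<and> \<not> E u (w 1) \<and> E u (w 2) \<and> E u (w 3) \<and> \<not> E u (w 4)"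
proof -
  have "{(0 + 3) mod 5, 0 mod 5, (0 + 2) mod 5} \<subseteq> {..<(5::nat)}" by auto
  then show ?thesis
    unfolding S23_def by (auto simp: Collect_less_5_eq_iff all_less_5)
qed

lemma induced_C5_vertices:
  assumes "induced_C5 V E w"
  shows "distinct [w 0, w 1, w 2, w 3, w 4]" and "{w 0, w 1, w 2, w 3, w 4} \<subseteq> V"
proof -
  have "distinct (map w [0..<5])"
    using assms unfolding induced_C5_def by (simp add: distinct_map lessThan_atLeast0)
  then show "distinct [w 0, w 1, w 2, w 3, w 4]"
    by (simp add: upt_rec numeral_eq_Suc)
  show "{w 0, w 1, w 2, w 3, w 4} \<subseteq> V"
    using assms unfolding induced_C5_def image_lessThan_5 by simp
qed

lemma induced_C5_adj:
  assumes "induced_C5 V E w"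
  shows "E (w 0) (w 1)" "E (w 1) (w 2)" "E (w 2) (w 3)" "E (w 3) (w 4)" "E (w 4) (w 0)"
    and "\<not> E (w 0) (w 2)" "\<not> E (w 0) (w 3)" "\<not> E (w 1) (w 3)" "\<not> E (w 1) (w 4)" "\<not> E (w 2) (w 4)"
  using assms unfolding induced_C5_def by auto

lemma homogeneous_component:
  assumes sym: "\<And>a b. E a b \<Longrightarrow> E b a" and "S \<subseteq> V" and "K \<in> components S E"
    and no_distinguisher: "\<And>u p q. u \<in> V - S \<Longrightarrow> p \<in> S \<Longrightarrow> q \<in> S \<Longrightarrow> E p q \<Longrightarrow> E u p \<Longrightarrow> E u q"
  shows "homogeneous V E K"
proof -
  define R where "R = (\<lambda>a b. a \<in> S \<and> b \<in> S \<and> E a b)"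
  obtain x where "x \<in> S" and K: "K = {y. R\<^sup>*\<^sup>* x y}"
    using assms(3) unfolding components_def R_def by blast
  have "R\<^sup>*\<^sup>* x y \<Longrightarrow> y \<in> S" for y
    by (induction rule: rtranclp_induct) (use \<open>x \<in> S\<close> R_def in auto)
  then have "K \<subseteq> S"
    using K by blast
  have "(\<forall>h\<in>K. E u h) \<or> (\<forall>h\<in>K. \<not> E u h)" if u: "u \<in> V - K" for u
  proof (cases "u \<in> S")
    case True
    have "\<not> E u h" if "h \<in> K" for h
    proof
      assume "E u h"
      then have "R h u"
        using \<open>h \<in> K\<close> \<open>K \<subseteq> S\<close> True sym by (auto simp: R_def)
      then show False
        using \<open>h \<in> K\<close> u K by (auto intro: rtranclp.rtrancl_into_rtrancl)
    qed
    then show ?thesis by blast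
  next
    case False
    with u have "u \<in> V - S" by blast
    have "E u y \<longleftrightarrow> E u x" if "R\<^sup>*\<^sup>* x y" for y
      using that
    proof (induction rule: rtranclp_induct)
      case (step y y')
      then have "y \<in> S" "y' \<in> S" "E y y'"
        by (auto simp: R_def)
      then have "E u y \<longleftrightarrow> E u y'"
        using no_distinguisher[OF \<open>u \<in> V - S\<close>] sym by blast
      with step.IH show ?case by simp
    qed simp
    then show ?thesis
      using K by blast
  qed
  with \<open>K \<subseteq> S\<close> \<open>S \<subseteq> V\<close> show ?thesis
    unfolding homogeneous_def by blast
qed

locale P5_chair_free_graph =
  fixes V :: "'a set" and E :: "'a \<Rightarrow> 'a \<Rightarrow> bool"
  assumes simple: "simple_graph V E"
    and P5_free: "P5_free V E"
    and chair_free: "chair_free V E"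
begin

lemma adj_sym: "E p q \<longleftrightarrow> E q p"
  using simple unfolding simple_graph_def by blast

lemma not_adj_self: "\<not> E p p"
  using simple unfolding simple_graph_def by blast

lemma no_induced_P5:
  assumes "{p0, p1, p2, p3, p4} \<subseteq> V" and "distinct [p0, p1, p2, p3, p4]"
    and "E p0 p1" "E p1 p2" "E p2 p3" "E p3 p4"
    and "\<not> E p0 p2" "\<not> E p0 p3" "\<not> E p0 p4" "\<not> E p1 p3" "\<not> E p1 p4" "\<not> E p2 p4"
  shows False
proof -
  have "contains_induced V E (length [p0, p1, p2, p3, p4]) P5_adj"
    by (rule contains_induced_listI)
      (use assms in \<open>auto simp: less_Suc_eq numeral_eq_Suc P5_adj_def adj_sym not_adj_self\<close>)
  then show False
    using P5_free unfolding P5_free_def by (simp add: numeral_eq_Suc)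
qed

lemma no_induced_chair:
  assumes "{p0, p1, p2, p3, p4} \<subseteq> V" and "distinct [p0, p1, p2, p3, p4]"
    and "E p0 p1" "E p1 p2" "E p2 p3" "E p1 p4"
    and "\<not> E p0 p2" "\<not> E p0 p3" "\<not> E p0 p4" "\<not> E p1 p3" "\<not> E p2 p4" "\<not> E p3 p4"
  shows False
proof -
  have "contains_induced V E (length [p0, p1, p2, p3, p4]) chair_adj"
    by (rule contains_induced_listI)
      (use assms in \<open>auto simp: less_Suc_eq numeral_eq_Suc chair_adj_def adj_sym not_adj_self\<close>)
  then show False
    using chair_free unfolding chair_free_def by (simp add: numeral_eq_Suc)
qed

end

locale C5_S23_edge = P5_chair_free_graph +
  fixes w :: "nat \<Rightarrow> 'a" and x y z :: 'a
  assumes C5: "induced_C5 V E w"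
    and x_S23: "x \<in> S23 V E w 0" and y_S23: "y \<in> S23 V E w 0" and x_y: "E x y"
    and z_off_C: "z \<in> V - w ` {..<5}" and z_x: "E z x" and z_not_y: "\<not> E z y" and z_ne_y: "z \<noteq> y"
begin

text \<open>The reversed list gives simp both orientations of every disequality.\<close>

lemma configuration_distinct:
  "distinct [w 0, w 1, w 2, w 3, w 4, x, y, z]" "distinct [z, y, x, w 4, w 3, w 2, w 1, w 0]"
proof -
  have "z \<noteq> x" "x \<noteq> y"
    using z_x x_y not_adj_self by auto
  with z_ne_y show "distinct [w 0, w 1, w 2, w 3, w 4, x, y, z]"
    using induced_C5_vertices(1)[OF C5] x_S23 y_S23 z_off_C by (auto simp: S23_0_iff image_lessThan_5)
  then show "distinct [z, y, x, w 4, w 3, w 2, w 1, w 0]"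
    by auto
qed

lemma configuration_in_V: "w 0 \<in> V" "w 1 \<in> V" "w 2 \<in> V" "w 3 \<in> V" "w 4 \<in> V" "x \<in> V" "y \<in> V" "z \<in> V"
  using induced_C5_vertices(2)[OF C5] x_S23 y_S23 z_off_C by (auto simp: S23_0_iff)

lemma S23_pattern:
  "E x (w 0)" "\<not> E x (w 1)" "E x (w 2)" "E x (w 3)" "\<not> E x (w 4)"
  "E y (w 0)" "\<not> E y (w 1)" "E y (w 2)" "E y (w 3)" "\<not> E y (w 4)"
  using x_S23 y_S23 by (simp_all add: S23_0_iff)

lemmas configuration = configuration_distinct configuration_in_V induced_C5_adj[OF C5] S23_pattern
  x_y z_x z_not_y

lemma z_not_adj_1: "\<not> E z (w 1)"
proof
  assume z1: "E z (w 1)"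
  consider "E z (w 4)" | "\<not> E z (w 4)" "E z (w 3)" | "\<not> E z (w 4)" "\<not> E z (w 3)"
    by blast
  then show False
  proof cases
    case 1
    then show False
      using no_induced_chair[of "w 1" z x y "w 4"] z1 configuration by (simp add: adj_sym)
  next
    case 2
    then show False
      using no_induced_chair[of "w 4" "w 3" z "w 1" y] z1 configuration by (simp add: adj_sym)
  next
    case 3
    then show False
      using no_induced_P5[of "w 1" z x "w 3" "w 4"] z1 configuration by (simp add: adj_sym)
  qed
qed

lemma z_not_adj_4: "\<not> E z (w 4)"
proof
  assume z4: "E z (w 4)"
  show False
  proof (cases "E z (w 2)")
    case True
    then show False
      using no_induced_chair[of "w 1" "w 2" z "w 4" y] z4 z_not_adj_1 configuration
      by (simp add: adj_sym)
  next
    case False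
    then show False
      using no_induced_P5[of "w 1" "w 2" x z "w 4"] z4 z_not_adj_1 configuration
      by (simp add: adj_sym)
  qed
qed

lemma z_adj_0: "E z (w 0)"
proof (rule ccontr)
  assume "\<not> E z (w 0)"
  then show False
    using no_induced_chair[of "w 1" "w 0" x z "w 4"] z_not_adj_1 z_not_adj_4 configuration
    by (simp add: adj_sym)
qed

lemma z_adj_2: "E z (w 2)"
proof (rule ccontr)
  assume "\<not> E z (w 2)"
  then show False
    using no_induced_chair[of "w 4" "w 0" "w 1" "w 2" z] z_not_adj_1 z_not_adj_4 z_adj_0 configuration
    by (simp add: adj_sym)
qed

lemma z_adj_3: "E z (w 3)"
proof (rule ccontr)
  assume "\<not> E z (w 3)"
  then show False
    using no_induced_chair[of "w 1" "w 0" "w 4" "w 3" z] z_not_adj_1 z_not_adj_4 z_adj_0 configuration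
    by (simp add: adj_sym)
qed

lemma z_in_S23: "z \<in> S23 V E w 0"
  using z_off_C z_adj_0 z_not_adj_1 z_adj_2 z_adj_3 z_not_adj_4 by (simp add: S23_0_iff)

end

context P5_chair_free_graph
begin

lemma edge_distinguisher_in_S23:
  assumes "induced_C5 V E w" and "x \<in> S23 V E w 0" and y: "y \<in> S23 V E w 0" and "E x y"
    and "z \<in> V - w ` {..<5}" and "E z x" and "\<not> E z y"
  shows "z \<in> S23 V E w 0"
proof (cases "z = y")
  case False
  interpret C5_S23_edge V E w x y z
    using assms False by unfold_locales
  show ?thesis by (rule z_in_S23)
qed (use y in simp)

lemma S23_edge_not_distinguished:
  assumes C: "induced_C5 V E w" and u: "u \<in> V - S23 V E w 0"
    and p: "p \<in> S23 V E w 0" and q: "q \<in> S23 V E w 0" and "E p q" and "E u p"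
  shows "E u q"
proof (cases "u \<in> w ` {..<5}")
  case True
  then show ?thesis
    using p q \<open>E u p\<close> by (auto simp: S23_0_iff image_lessThan_5 adj_sym)
next
  case False
  show ?thesis
  proof (rule ccontr)
    assume "\<not> E u q"
    with False u have "u \<in> S23 V E w 0"
      using edge_distinguisher_in_S23[OF C p q \<open>E p q\<close>] \<open>E u p\<close> by blast
    with u show False by blast
  qed
qed

end

theorem mainTheorem8:
  fixes V :: "'a set" and E :: "'a \<Rightarrow> 'a \<Rightarrow> bool" and v :: "nat \<Rightarrow> 'a"
  assumes "simple_graph V E"
    and "vertex_critical V E 5"
    and "P5_free V E"
    and "chair_free V E"
    and "induced_C5 V E v"
  shows "\<forall>i<5. \<forall>K \<in> components (S23 V E v i) E. homogeneous V E K"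
proof (intro allI impI ballI)
  fix i K assume K: "K \<in> components (S23 V E v i) E"
  interpret P5_chair_free_graph V E
    using assms by unfold_locales
  have C: "induced_C5 V E (\<lambda>k. v ((i + k) mod 5))"
    using assms(5) by (rule induced_C5_rotate)
  show "homogeneous V E K"
  proof (rule homogeneous_component[OF _ _ K])
    show "E b a" if "E a b" for a b
      using that adj_sym by blast
    show "S23 V E v i \<subseteq> V"
      by (auto simp: S23_def)
    show "E u q" if "u \<in> V - S23 V E v i" "p \<in> S23 V E v i" "q \<in> S23 V E v i" "E p q" "E u p"
      for u p q
      using S23_edge_not_distinguished[OF C] that unfolding S23_rotate[of V E v i] by blast
  qed
qed

end
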